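(* Let $L\in K[D]$ with $\operatorname{Sym}_L=S_1\cdots S_k$ (homogeneous $S_i$), let $g\in K$ be invertible, and let $R$ be a common obstacle to factorization of $L$ of type $(S_1)\cdots(S_k)$. Then $g^{-1}\circ R\circ g$ is a common obstacle to factorization of type $(S_1)\cdots(S_k)$ of the gauge transformed operator $g^{-1}\circ L\circ g$.
   Context: $K$ is a field with commuting derivations $\partial_1,\dots,\partial_n$, and $K[D]=K[D_1,\dots,D_n]$ is the ring of linear differential operators over $K$: the $D_i$ commute with each other and $D_i\circ a=aD_i+\partial_i(a)$ for $a\in K$. Every $L\in K[D]$ is uniquely $\sum_{|J|\le d}a_JD^J$ with $a_J\in K$ and $D^J=D_1^{j_1}\cdots D_n^{j_n}$. The order $\operatorname{ord}(L)$ is the largest $|J|$ with $a_J\ne0$, and $\operatorname{ord}(0)=-\infty$. The symbol $\operatorname{Sym}_L=\sum_{|J|=\operatorname{ord}L}a_JX^J$; note that $\operatorname{Sym}_{g^{-1}\circ L\circ g}=\operatorname{Sym}_L$. A factorization of type $(S_1)\cdots(S_k)$ of an operator $M$ is $M=F_1\circ\cdots\circ F_k$ with $\operatorname{Sym}_{F_i}=S_i$. A common obstacle to factorization of $M$ of type $(S_1)\cdots(S_k)$ is an operator $R$ such that $M-R$ has a factorization of that type and $R$ has the minimal possible order among such operators. *)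

theory Defs
  imports Complex_Main "HOL-Library.Poly_Mapping" "HOL-Library.Extended_Real"
begin

(* Polynomials in K[X_1..X_n] and operators in K[D_1..D_n] are both represented as
   finitely supported maps  multi-index => coefficient.  Only variables 0..n-1 are used. *)
type_synonym mindex = "nat \<Rightarrow>\<^sub>0 nat"
type_synonym 'k mpoly = "mindex \<Rightarrow>\<^sub>0 'k"   (* polynomials, with the convolution product *)
type_synonym 'k dop = "mindex \<Rightarrow>\<^sub>0 'k"

definition mdeg :: "mindex \<Rightarrow> nat" where
  "mdeg J = (\<Sum>i\<in>Poly_Mapping.keys J. Poly_Mapping.lookup J i)"

definition in_vars :: "nat \<Rightarrow> mindex \<Rightarrow> bool" where
  "in_vars n J \<longleftrightarrow> (\<forall>i. n \<le> i \<longrightarrow> Poly_Mapping.lookup J i = 0)"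

definition in_KD :: "nat \<Rightarrow> (mindex \<Rightarrow>\<^sub>0 'k::zero) \<Rightarrow> bool" where
  "in_KD n L \<longleftrightarrow> (\<forall>J\<in>Poly_Mapping.keys L. in_vars n J)"

definition commuting_derivations :: "nat \<Rightarrow> (nat \<Rightarrow> 'k::field \<Rightarrow> 'k) \<Rightarrow> bool" where
  "commuting_derivations n d \<longleftrightarrow>
     (\<forall>i<n. \<forall>a b. d i (a + b) = d i a + d i b) \<and>
     (\<forall>i<n. \<forall>a b. d i (a * b) = a * d i b + d i a * b) \<and>
     (\<forall>i<n. \<forall>j<n. \<forall>a. d i (d j a) = d j (d i a))"

definition dpow :: "nat \<Rightarrow> (nat \<Rightarrow> 'k \<Rightarrow> 'k) \<Rightarrow> mindex \<Rightarrow> 'k \<Rightarrow> 'k" where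
  "dpow n d J = foldr (\<lambda>i f. (d i ^^ Poly_Mapping.lookup J i) \<circ> f) [0..<n] id"

definition mbinom :: "nat \<Rightarrow> mindex \<Rightarrow> mindex \<Rightarrow> nat" where
  "mbinom n J M = (\<Prod>i<n. Poly_Mapping.lookup J i choose Poly_Mapping.lookup M i)"

definition mle :: "mindex \<Rightarrow> mindex \<Rightarrow> bool" where
  "mle M J \<longleftrightarrow> (\<forall>i. Poly_Mapping.lookup M i \<le> Poly_Mapping.lookup J i)"

(* composition in K[D]:  (a_J D^J) o (b_I D^I) = a_J sum_{M <= J} (J choose M) \<partial>^{J-M}(b_I) D^{M+I},
   i.e. the Leibniz rule D_i o a = a D_i + \<partial>_i(a) with commuting D_i, extended bilinearly *)
definition dcomp :: "nat \<Rightarrow> (nat \<Rightarrow> 'k::field \<Rightarrow> 'k) \<Rightarrow> 'k dop \<Rightarrow> 'k dop \<Rightarrow> 'k dop" where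
  "dcomp n d P Q =
     (\<Sum>J\<in>Poly_Mapping.keys P. \<Sum>I\<in>Poly_Mapping.keys Q. \<Sum>M\<in>{M. mle M J}.
        Poly_Mapping.single (M + I) (Poly_Mapping.lookup P J * of_nat (mbinom n J M) * dpow n d (J - M) (Poly_Mapping.lookup Q I)))"

definition scal_op :: "'k::zero \<Rightarrow> 'k dop" where
  "scal_op a = Poly_Mapping.single 0 a"

definition ord :: "'k::zero dop \<Rightarrow> ereal" where
  "ord L = (if L = 0 then -\<infinity> else ereal (real (Max (mdeg ` Poly_Mapping.keys L))))"

definition Sym :: "'k::comm_monoid_add dop \<Rightarrow> 'k mpoly" where
  "Sym L = (\<Sum>J\<in>{J\<in>Poly_Mapping.keys L. mdeg J = Max (mdeg ` Poly_Mapping.keys L)}. Poly_Mapping.single J (Poly_Mapping.lookup L J))"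

definition homogeneous :: "'k::zero mpoly \<Rightarrow> bool" where
  "homogeneous S \<longleftrightarrow> (\<exists>m. \<forall>J\<in>Poly_Mapping.keys S. mdeg J = m)"

definition has_factorization ::
  "nat \<Rightarrow> (nat \<Rightarrow> 'k::field \<Rightarrow> 'k) \<Rightarrow> 'k dop \<Rightarrow> 'k mpoly list \<Rightarrow> bool" where
  "has_factorization n d M Ss \<longleftrightarrow>
     (\<exists>Fs. length Fs = length Ss \<and> (\<forall>F\<in>set Fs. in_KD n F) \<and>
           map Sym Fs = Ss \<and> M = foldr (dcomp n d) Fs (scal_op 1))"

definition common_obstacle ::
  "nat \<Rightarrow> (nat \<Rightarrow> 'k::field \<Rightarrow> 'k) \<Rightarrow> 'k dop \<Rightarrow> 'k mpoly list \<Rightarrow> 'k dop \<Rightarrow> bool" where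
  "common_obstacle n d M Ss R \<longleftrightarrow>
     in_KD n R \<and> has_factorization n d (M - R) Ss \<and>
     (\<forall>R'. in_KD n R' \<and> has_factorization n d (M - R') Ss \<longrightarrow> ord R \<le> ord R')"

definition gauge :: "nat \<Rightarrow> (nat \<Rightarrow> 'k::field \<Rightarrow> 'k) \<Rightarrow> 'k \<Rightarrow> 'k dop \<Rightarrow> 'k dop" where
  "gauge n d g L = dcomp n d (scal_op (inverse g)) (dcomp n d L (scal_op g))"

end

theory Submission
  imports Defs "HOL-Library.Function_Algebras" "HOL-Library.FuncSet"
begin

text \<open>
  The ring \<open>K[D]\<close> acts faithfully on Hurwitz series over \<open>K\<close>, i.e. on functions \<open>v\<close> on
  multi-indices, by \<open>(D\<^sub>i v)(I) = \<partial>\<^sub>i(v I) + v(I + e\<^sub>i)\<close> and multiplication by scalars; the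
  Leibniz rule shows that \<^const>\<open>dcomp\<close> corresponds to composition of these actions. Hence
  \<open>gauge g\<close> is a ring endomorphism of \<open>K[D]\<close>, with inverse \<open>gauge g\<^sup>-\<^sup>1\<close>. It preserves symbols
  and orders, because conjugating by \<open>g\<close> only adds terms carrying derivatives of \<open>g\<close>, which
  have lower order. So it maps factorizations of type \<open>(S\<^sub>1)\<cdots>(S\<^sub>k)\<close> to factorizations of the
  same type, transports the candidate obstacles of \<open>L\<close> bijectively onto those of
  \<open>g\<^sup>-\<^sup>1 \<circ> L \<circ> g\<close>, and keeps their orders.
\<close>

abbreviation lookup :: "('a \<Rightarrow>\<^sub>0 'b::zero) \<Rightarrow> 'a \<Rightarrow> 'b"
  where "lookup \<equiv> Poly_Mapping.lookup"
abbreviation keys :: "('a \<Rightarrow>\<^sub>0 'b::zero) \<Rightarrow> 'a set"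
  where "keys \<equiv> Poly_Mapping.keys"
abbreviation single :: "'a \<Rightarrow> 'b \<Rightarrow> 'a \<Rightarrow>\<^sub>0 'b::zero"
  where "single \<equiv> Poly_Mapping.single"

declare One_nat_def [simp del]

section \<open>Multi-index powers of commuting maps\<close>

definition funpow_multi :: "nat list \<Rightarrow> (nat \<Rightarrow> 'a \<Rightarrow> 'a) \<Rightarrow> mindex \<Rightarrow> 'a \<Rightarrow> 'a" where
  "funpow_multi xs F J = foldr (\<lambda>i f. (F i ^^ lookup J i) \<circ> f) xs id"

lemma funpow_multi_Nil [simp]: "funpow_multi [] F J = id"
  by (simp add: funpow_multi_def)

lemma funpow_multi_Cons [simp]:
  "funpow_multi (i # xs) F J = (F i ^^ lookup J i) \<circ> funpow_multi xs F J"
  by (simp add: funpow_multi_def)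

lemma funpow_multi_zero: "funpow_multi xs F 0 = id"
  by (induction xs) auto

lemma funpow_comp_commute: "f \<circ> g = g \<circ> f \<Longrightarrow> (f ^^ k) \<circ> g = g \<circ> (f ^^ k)"
proof (induction k)
  case (Suc k)
  have "(f ^^ Suc k) \<circ> g = f \<circ> ((f ^^ k) \<circ> g)" by (simp add: comp_assoc)
  also have "\<dots> = (f \<circ> g) \<circ> (f ^^ k)" by (simp only: Suc.IH[OF Suc.prems] comp_assoc)
  also have "\<dots> = g \<circ> (f ^^ Suc k)" by (simp only: Suc.prems funpow.simps comp_assoc)
  finally show ?case .
qed simp

lemma funpow_multi_commute:
  assumes "\<And>j. j \<in> set xs \<Longrightarrow> F i \<circ> F j = F j \<circ> F i"
  shows "(F i ^^ k) \<circ> funpow_multi xs F J = funpow_multi xs F J \<circ> (F i ^^ k)"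
  using assms
proof (induction xs)
  case (Cons a xs)
  have a: "(F i ^^ k) \<circ> (F a ^^ lookup J a) = (F a ^^ lookup J a) \<circ> (F i ^^ k)"
    by (metis Cons.prems funpow_comp_commute list.set_intros(1))
  have IH: "(F i ^^ k) \<circ> funpow_multi xs F J = funpow_multi xs F J \<circ> (F i ^^ k)"
    by (intro Cons.IH Cons.prems) simp
  have "(F i ^^ k) \<circ> funpow_multi (a # xs) F J
      = ((F i ^^ k) \<circ> (F a ^^ lookup J a)) \<circ> funpow_multi xs F J"
    by (simp only: funpow_multi_Cons comp_assoc)
  also have "\<dots> = (F a ^^ lookup J a) \<circ> ((F i ^^ k) \<circ> funpow_multi xs F J)"
    by (simp only: a comp_assoc)
  also have "\<dots> = funpow_multi (a # xs) F J \<circ> (F i ^^ k)"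
    by (simp only: IH funpow_multi_Cons comp_assoc)
  finally show ?case .
qed simp

lemma funpow_multi_add:
  assumes "\<And>i j. i \<in> set xs \<Longrightarrow> j \<in> set xs \<Longrightarrow> F i \<circ> F j = F j \<circ> F i"
  shows "funpow_multi xs F (J + K) = funpow_multi xs F J \<circ> funpow_multi xs F K"
  using assms
proof (induction xs)
  case (Cons a xs)
  have IH: "funpow_multi xs F (J + K) = funpow_multi xs F J \<circ> funpow_multi xs F K"
    by (intro Cons.IH Cons.prems) auto
  have commute: "(F a ^^ lookup K a) \<circ> funpow_multi xs F J = funpow_multi xs F J \<circ> (F a ^^ lookup K a)"
    by (intro funpow_multi_commute Cons.prems) auto
  have "funpow_multi (a # xs) F (J + K)
      = (F a ^^ lookup J a) \<circ> ((F a ^^ lookup K a) \<circ> funpow_multi xs F J) \<circ> funpow_multi xs F K"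
    by (simp only: IH funpow_multi_Cons lookup_add funpow_add comp_assoc)
  also have "\<dots> = funpow_multi (a # xs) F J \<circ> funpow_multi (a # xs) F K"
    by (simp only: commute funpow_multi_Cons comp_assoc)
  finally show ?case .
qed simp

lemma funpow_multi_single:
  assumes "distinct xs" "i \<in> set xs"
  shows "funpow_multi xs F (single i 1) = F i"
  using assms
proof (induction xs)
  case (Cons a xs)
  have "funpow_multi ys F (single i 1) = id" if "i \<notin> set ys" for ys
    using that by (induction ys) (auto simp: lookup_single)
  with Cons show ?case
    by (cases "a = i") (auto simp: lookup_single One_nat_def)
qed simp

lemma additive_funpow: "additive (f :: 'a::ab_group_add \<Rightarrow> 'a) \<Longrightarrow> additive (f ^^ k)"
  unfolding additive_def by (induction k) auto

lemma additive_funpow_multi: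
  assumes "\<And>i. i \<in> set xs \<Longrightarrow> additive (F i)"
  shows "additive (funpow_multi xs F J)"
  using assms
proof (induction xs)
  case (Cons a xs)
  then have "additive (F a ^^ lookup J a)" "additive (funpow_multi xs F J)"
    by (simp_all add: additive_funpow)
  then show ?case by (simp add: additive_def)
qed (simp add: additive_def)

lemma finite_mle: "finite {M. mle M J}"
proof -
  let ?f = "\<lambda>M::mindex. restrict (lookup M) (keys J)"
  have "inj_on ?f {M. mle M J}"
  proof (rule inj_onI)
    fix M M' assume M: "M \<in> {M. mle M J}" and M': "M' \<in> {M. mle M J}" and eq: "?f M = ?f M'"
    show "M = M'"
    proof (rule poly_mapping_eqI)
      fix i show "lookup M i = lookup M' i"
      proof (cases "i \<in> keys J")
        case True then show ?thesis using eq by (metis restrict_apply')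
      next
        case False
        then have "lookup J i = 0" by (simp add: in_keys_iff)
        then show ?thesis using M M' by (auto simp: mle_def) (metis le_zero_eq)
      qed
    qed
  qed
  moreover have "?f ` {M. mle M J} \<subseteq> PiE (keys J) (\<lambda>i. {..lookup J i})"
    by (auto simp: mle_def PiE_def extensional_def)
  then have "finite (?f ` {M. mle M J})"
    by (rule finite_subset) (rule finite_PiE, auto)
  ultimately show ?thesis
    using finite_imageD by blast
qed

lemma mle_zero_iff: "mle M 0 \<longleftrightarrow> M = 0"
  by (auto simp: mle_def poly_mapping_eq_iff fun_eq_iff)

lemma mle_add_single: "mle M J \<Longrightarrow> mle M (J + single i 1)"
  by (auto simp: mle_def lookup_add) (metis le_add1 order_trans)

lemma diff_add_single_mindex: "mle M J \<Longrightarrow> J + single i 1 - M = J - M + single i 1"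
  by (rule poly_mapping_eqI) (auto simp: mle_def lookup_add lookup_minus lookup_single when_def)

lemma add_single_diff_add_single_mindex: "J + single i 1 - (M + single i 1) = J - M"
  by (rule poly_mapping_eqI) (auto simp: lookup_add lookup_minus lookup_single when_def)

lemma mle_with_positive_entry:
  "{M. mle M (J + single i 1) \<and> 0 < lookup M i} = (\<lambda>M. M + single i 1) ` {M. mle M J}"
proof (intro set_eqI iffI)
  fix M assume M: "M \<in> {M. mle M (J + single i 1) \<and> 0 < lookup M i}"
  have "M = (M - single i 1) + single i 1"
    by (rule poly_mapping_eqI) (use M in \<open>auto simp: lookup_add lookup_minus lookup_single when_def\<close>)
  moreover have "mle (M - single i 1) J"
    unfolding mle_def
  proof
    fix k
    have "lookup M k \<le> lookup J k + lookup (single i 1) k"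
      using M by (auto simp: mle_def lookup_add)
    then show "lookup (M - single i 1) k \<le> lookup J k"
      by (auto simp: lookup_minus lookup_single when_def)
  qed
  ultimately show "M \<in> (\<lambda>M. M + single i 1) ` {M. mle M J}" by blast
qed (auto simp: mle_def lookup_add lookup_single)

lemma in_vars_add: "in_vars n A \<Longrightarrow> in_vars n B \<Longrightarrow> in_vars n (A + B)"
  by (simp add: in_vars_def lookup_add)

lemma in_vars_single: "i < n \<Longrightarrow> in_vars n (single i 1)"
  by (simp add: in_vars_def lookup_single)

lemma in_vars_mle: "mle M J \<Longrightarrow> in_vars n J \<Longrightarrow> in_vars n M"
  by (auto simp: in_vars_def mle_def) (metis le_zero_eq)

lemma mindex_induct [consumes 1, case_names zero step]:
  assumes "in_vars n J" "P 0"
    and "\<And>J i. in_vars n J \<Longrightarrow> i < n \<Longrightarrow> P J \<Longrightarrow> P (J + single i 1)"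
  shows "P J"
  using assms(1)
proof (induction "\<Sum>k<n. lookup J k" arbitrary: J rule: less_induct)
  case less
  show ?case
  proof (cases "J = 0")
    case False
    then obtain i where i: "lookup J i \<noteq> 0"
      by (metis poly_mapping_eqI lookup_zero)
    with less.prems have "i < n"
      unfolding in_vars_def by (meson not_le)
    define J' where "J' = J - single i 1"
    have J: "J = J' + single i 1"
      by (rule poly_mapping_eqI) (use i in \<open>auto simp: J'_def lookup_add lookup_minus lookup_single when_def\<close>)
    have J': "in_vars n J'"
      using less.prems by (auto simp: in_vars_def J'_def lookup_minus)
    have "(\<Sum>k<n. lookup J k) = (\<Sum>k<n. lookup J' k) + 1"
      using \<open>i < n\<close> by (subst J) (simp add: lookup_add sum.distrib lookup_single when_def)
    with less.hyps J' have "P J'" by simp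
    then show ?thesis
      using assms(3)[OF J' \<open>i < n\<close>] J by simp
  qed (simp add: assms(2))
qed

lemma mbinom_refl: "mbinom n J J = 1"
  by (simp add: mbinom_def)

lemma mbinom_eq_0:
  assumes "in_vars n M" "\<not> mle M J"
  shows "mbinom n J M = 0"
proof -
  obtain k where k: "lookup J k < lookup M k"
    using assms(2) by (auto simp: mle_def not_le)
  with assms(1) have "k < n"
    unfolding in_vars_def by (metis not_le not_less_zero)
  with k show ?thesis
    unfolding mbinom_def by (intro prod_zero) auto
qed

lemma mbinom_add_single:
  assumes "i < n"
  shows "mbinom n (J + single i 1) M =
    mbinom n J M + (if 0 < lookup M i then mbinom n J (M - single i 1) else 0)"
proof -
  let ?R = "{..<n} - {i}"
  have split: "(\<Prod>k<n. f k) = f i * (\<Prod>k\<in>?R. f k :: nat)" for f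
    using assms by (metis finite_lessThan lessThan_iff prod.remove)
  have other1: "(\<Prod>k\<in>?R. lookup (J + single i 1) k choose lookup M k) = (\<Prod>k\<in>?R. lookup J k choose lookup M k)"
    by (rule prod.cong) (auto simp: lookup_add lookup_single)
  have other2: "(\<Prod>k\<in>?R. lookup J k choose lookup (M - single i 1) k) = (\<Prod>k\<in>?R. lookup J k choose lookup M k)"
    by (rule prod.cong) (auto simp: lookup_minus lookup_single)
  show ?thesis
  proof (cases "0 < lookup M i")
    case True
    then obtain m where m: "lookup M i = Suc m" by (metis gr0_implies_Suc)
    then have "lookup (M - single i 1) i = m" by (simp add: lookup_minus One_nat_def)
    with True show ?thesis
      unfolding mbinom_def split other1 other2 by (simp add: lookup_add m algebra_simps One_nat_def)
  next
    case False
    then show ?thesis unfolding mbinom_def split other1 by (simp add: lookup_add)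
  qed
qed

lemma sum_mbinom_add_single:
  fixes x :: "mindex \<Rightarrow> mindex \<Rightarrow> 'a::comm_semiring_1"
  assumes i: "i < n" and J: "in_vars n J"
  shows "(\<Sum>M\<in>{M. mle M (J + single i 1)}. of_nat (mbinom n (J + single i 1) M) * x (J + single i 1 - M) M)
       = (\<Sum>M\<in>{M. mle M J}. of_nat (mbinom n J M) *
            (x (J + single i 1 - M) M + x (J - M) (M + single i 1)))"
proof -
  let ?e = "single i 1"
  have "in_vars n (J + ?e)"
    using J i by (intro in_vars_add in_vars_single)
  then have "mbinom n J M = 0" if "M \<in> {M. mle M (J + ?e)} - {M. mle M J}" for M
    using that by (intro mbinom_eq_0) (auto dest: in_vars_mle)
  then have lower: "(\<Sum>M\<in>{M. mle M (J + ?e)}. of_nat (mbinom n J M) * x (J + ?e - M) M)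
      = (\<Sum>M\<in>{M. mle M J}. of_nat (mbinom n J M) * x (J + ?e - M) M)"
    by (intro sum.mono_neutral_right finite_mle) (auto simp: mle_add_single)
  have "(\<Sum>M\<in>{M. mle M (J + ?e)}.
        of_nat (if 0 < lookup M i then mbinom n J (M - ?e) else 0) * x (J + ?e - M) M)
      = (\<Sum>M\<in>{M. mle M (J + ?e) \<and> 0 < lookup M i}. of_nat (mbinom n J (M - ?e)) * x (J + ?e - M) M)"
    by (rule sum.mono_neutral_cong_right[OF finite_mle]) auto
  also have "\<dots> = (\<Sum>M\<in>(\<lambda>M. M + ?e) ` {M. mle M J}. of_nat (mbinom n J (M - ?e)) * x (J + ?e - M) M)"
    by (simp only: mle_with_positive_entry)
  also have "\<dots> = (\<Sum>M\<in>{M. mle M J}. of_nat (mbinom n J M) * x (J - M) (M + ?e))"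
    by (subst sum.reindex) (auto simp: inj_on_def add_single_diff_add_single_mindex)
  finally have upper: "(\<Sum>M\<in>{M. mle M (J + ?e)}.
        of_nat (if 0 < lookup M i then mbinom n J (M - ?e) else 0) * x (J + ?e - M) M)
      = (\<Sum>M\<in>{M. mle M J}. of_nat (mbinom n J M) * x (J - M) (M + ?e))" .
  show ?thesis
    unfolding mbinom_add_single[OF i] of_nat_add distrib_right distrib_left sum.distrib lower upper ..
qed

lemma mdeg_eq_sum: "keys K \<subseteq> A \<Longrightarrow> finite A \<Longrightarrow> mdeg K = (\<Sum>i\<in>A. lookup K i)"
  unfolding mdeg_def by (rule sum.mono_neutral_left) (auto simp: in_keys_iff)

lemma mle_keys: "mle K J \<Longrightarrow> keys K \<subseteq> keys J"
  by (auto simp: mle_def in_keys_iff) (meson order_less_le_trans)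

lemma mdeg_mono: "mle K J \<Longrightarrow> mdeg K \<le> mdeg J"
  using mdeg_eq_sum[OF mle_keys, of K J] by (simp add: mdeg_def sum_mono mle_def)

lemma mle_mdeg_eq_imp_eq:
  assumes "mle K J" "mdeg K = mdeg J"
  shows "K = J"
proof (rule ccontr)
  assume "K \<noteq> J"
  then obtain i where "lookup K i \<noteq> lookup J i"
    by (metis poly_mapping_eqI)
  with assms(1) have lt: "lookup K i < lookup J i"
    by (auto simp: mle_def le_less)
  then have "i \<in> keys J" by (simp add: in_keys_iff)
  have "mdeg K = (\<Sum>i\<in>keys J. lookup K i)"
    by (rule mdeg_eq_sum[OF mle_keys[OF assms(1)]]) simp
  also have "\<dots> < (\<Sum>i\<in>keys J. lookup J i)"
    by (rule sum_strict_mono_ex1) (use assms(1) lt \<open>i \<in> keys J\<close> in \<open>auto simp: mle_def\<close>)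
  finally show False
    using assms(2) by (simp add: mdeg_def)
qed

context
  fixes n :: nat and d :: "nat \<Rightarrow> 'k::field \<Rightarrow> 'k"
  assumes cd: "commuting_derivations n d"
begin

lemma derivation_add: "i < n \<Longrightarrow> d i (a + b) = d i a + d i b"
  using cd unfolding commuting_derivations_def by blast

lemma derivation_mult: "i < n \<Longrightarrow> d i (a * b) = a * d i b + d i a * b"
  using cd unfolding commuting_derivations_def by blast

lemma derivations_commute: "i < n \<Longrightarrow> j < n \<Longrightarrow> d i (d j a) = d j (d i a)"
  using cd unfolding commuting_derivations_def by blast

lemma additive_derivation: "i < n \<Longrightarrow> additive (d i)"
  by (simp add: additive_def derivation_add)

lemma derivation_one: "i < n \<Longrightarrow> d i 1 = 0"
proof -
  assume "i < n"
  then have "d i 1 = d i 1 + d i 1"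
    using derivation_mult[of i 1 1] by simp
  then show ?thesis by (metis add_cancel_right_right)
qed

lemma derivation_of_nat_mult: "i < n \<Longrightarrow> d i (of_nat c * a) = of_nat c * d i a"
proof -
  assume i: "i < n"
  have "d i (of_nat c) = 0"
    by (induction c) (simp_all add: i derivation_add derivation_one additive.zero[OF additive_derivation[OF i]])
  then show ?thesis by (simp add: i derivation_mult)
qed

lemma dpow_eq_funpow_multi: "dpow n d J = funpow_multi [0..<n] d J"
  by (simp add: dpow_def funpow_multi_def)

lemma dpow_zero: "dpow n d 0 = id"
  by (simp add: dpow_eq_funpow_multi funpow_multi_zero)

lemma dpow_add: "dpow n d (J + K) = dpow n d J \<circ> dpow n d K"
  unfolding dpow_eq_funpow_multi by (rule funpow_multi_add) (auto simp: fun_eq_iff derivations_commute)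

lemma dpow_add_single: "i < n \<Longrightarrow> dpow n d (J + single i 1) = d i \<circ> dpow n d J"
  unfolding add.commute[of J] dpow_add by (simp add: dpow_eq_funpow_multi funpow_multi_single)

end

section \<open>The action of differential operators on Hurwitz series\<close>

text \<open>
  A Hurwitz series \<open>\<Sum>\<^sub>I v(I) x\<^sup>I/I!\<close> is stored as its coefficient function \<open>v\<close>; \<open>D\<^sub>i\<close> acts as
  \<open>\<partial>\<^sub>i + \<partial>/\<partial>x\<^sub>i\<close>, and the series \<^term>\<open>hmonomial 0 I\<close> extracts the coefficient of \<open>D\<^sup>I\<close>.
\<close>

definition hscale :: "'k::field \<Rightarrow> (mindex \<Rightarrow> 'k) \<Rightarrow> mindex \<Rightarrow> 'k" where
  "hscale c v = (\<lambda>I. c * v I)"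

definition hD :: "(nat \<Rightarrow> 'k::field \<Rightarrow> 'k) \<Rightarrow> nat \<Rightarrow> (mindex \<Rightarrow> 'k) \<Rightarrow> mindex \<Rightarrow> 'k" where
  "hD d i v = (\<lambda>I. d i (v I) + v (I + single i 1))"

definition hDpow :: "nat \<Rightarrow> (nat \<Rightarrow> 'k::field \<Rightarrow> 'k) \<Rightarrow> mindex \<Rightarrow> (mindex \<Rightarrow> 'k) \<Rightarrow> mindex \<Rightarrow> 'k" where
  "hDpow n d J = funpow_multi [0..<n] (hD d) J"

definition hmonomial :: "mindex \<Rightarrow> mindex \<Rightarrow> mindex \<Rightarrow> 'k::field" where
  "hmonomial A I = (\<lambda>K. if K + A = I then 1 else 0)"

definition op_action :: "nat \<Rightarrow> (nat \<Rightarrow> 'k::field \<Rightarrow> 'k) \<Rightarrow> 'k dop \<Rightarrow> (mindex \<Rightarrow> 'k) \<Rightarrow> mindex \<Rightarrow> 'k" where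
  "op_action n d P v = (\<Sum>J\<in>keys P. hscale (lookup P J) (hDpow n d J v))"

lemma sum_fun_apply: "sum f A x = (\<Sum>a\<in>A. f a x)"
  by (induction A rule: infinite_finite_induct) auto

lemma additive_hscale: "additive (hscale c)"
  by (simp add: additive_def hscale_def fun_eq_iff algebra_simps)

lemma hscale_add_left: "hscale (a + b) v = hscale a v + hscale b v"
  by (simp add: hscale_def fun_eq_iff algebra_simps)

lemma hscale_one [simp]: "hscale 1 v = v"
  by (simp add: hscale_def)

lemma hscale_hscale: "hscale a (hscale b v) = hscale (a * b) v"
  by (simp add: hscale_def mult.assoc)

lemma hscale_inverse [simp]: "g \<noteq> 0 \<Longrightarrow> hscale g (hscale (inverse g) v) = v"
  "g \<noteq> 0 \<Longrightarrow> hscale (inverse g) (hscale g v) = v"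
  by (simp_all add: hscale_def mult.assoc[symmetric])

lemma op_action_eq_sum_superset:
  assumes "finite T" "keys P \<subseteq> T"
  shows "op_action n d P v = (\<Sum>J\<in>T. hscale (lookup P J) (hDpow n d J v))"
  unfolding op_action_def
  by (rule sum.mono_neutral_left[OF assms]) (auto simp: in_keys_iff hscale_def fun_eq_iff)

lemma op_action_add: "op_action n d (P + Q) v = op_action n d P v + op_action n d Q v"
proof -
  have T: "finite (keys P \<union> keys Q)" by simp
  show ?thesis
    using keys_add[of P Q]
    by (simp add: op_action_eq_sum_superset[OF T] lookup_add hscale_add_left sum.distrib)
qed

lemma additive_op_action: "additive (\<lambda>P. op_action n d P v)"
  by (simp add: additive_def op_action_add)

lemma op_action_sum: "op_action n d (sum f A) v = (\<Sum>x\<in>A. op_action n d (f x) v)"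
  by (rule additive.sum[OF additive_op_action])

lemma op_action_single: "op_action n d (single K c) v = hscale c (hDpow n d K v)"
  by (simp add: op_action_def hscale_def fun_eq_iff)

context
  fixes n :: nat and d :: "nat \<Rightarrow> 'k::field \<Rightarrow> 'k"
  assumes cd: "commuting_derivations n d"
begin

lemma additive_hD: "i < n \<Longrightarrow> additive (hD d i)"
  by (simp add: additive_def hD_def fun_eq_iff derivation_add[OF cd])

lemma hD_commute: "i < n \<Longrightarrow> j < n \<Longrightarrow> hD d i \<circ> hD d j = hD d j \<circ> hD d i"
  by (simp add: hD_def fun_eq_iff derivation_add[OF cd] derivations_commute[OF cd] add_ac)

lemma hD_hscale: "i < n \<Longrightarrow> hD d i (hscale b w) = hscale (d i b) w + hscale b (hD d i w)"
  by (simp add: hD_def hscale_def fun_eq_iff derivation_mult[OF cd] algebra_simps)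

lemma hD_of_nat_mult: "i < n \<Longrightarrow> hD d i (of_nat c * v) = of_nat c * hD d i v"
  by (simp add: hD_def fun_eq_iff derivation_of_nat_mult[OF cd] of_nat_fun algebra_simps)

lemma hD_hmonomial: "i < n \<Longrightarrow> hD d i (hmonomial A I) = hmonomial (A + single i 1) I"
  using additive.zero[OF additive_derivation[OF cd]]
  by (auto simp: hD_def hmonomial_def fun_eq_iff derivation_one[OF cd] add_ac)

lemma additive_hDpow: "additive (hDpow n d J)"
  unfolding hDpow_def by (rule additive_funpow_multi) (simp add: additive_hD)

lemma hDpow_zero: "hDpow n d 0 = id"
  by (simp add: hDpow_def funpow_multi_zero)

lemma hDpow_add: "hDpow n d (J + K) = hDpow n d J \<circ> hDpow n d K"
  unfolding hDpow_def by (rule funpow_multi_add) (simp add: hD_commute)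

lemma hDpow_add_single: "i < n \<Longrightarrow> hDpow n d (J + single i 1) = hD d i \<circ> hDpow n d J"
  unfolding add.commute[of J] hDpow_add by (simp add: hDpow_def funpow_multi_single)

lemma hDpow_hmonomial: "in_vars n J \<Longrightarrow> hDpow n d J (hmonomial 0 I) = hmonomial J I"
proof (induction J rule: mindex_induct)
  case (step J i)
  then show ?case by (simp add: hDpow_add_single hD_hmonomial)
qed (simp add: hDpow_zero)

lemma hDpow_hscale:
  assumes "in_vars n J"
  shows "hDpow n d J (hscale b w) =
    (\<Sum>M\<in>{M. mle M J}. of_nat (mbinom n J M) * hscale (dpow n d (J - M) b) (hDpow n d M w))"
  using assms
proof (induction J rule: mindex_induct)
  case zero
  show ?case
    by (simp add: mle_zero_iff hDpow_zero dpow_zero[OF cd] mbinom_refl)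
next
  case (step J i)
  let ?e = "single i 1"
  have "hDpow n d (J + ?e) (hscale b w)
      = hD d i (\<Sum>M\<in>{M. mle M J}. of_nat (mbinom n J M) * hscale (dpow n d (J - M) b) (hDpow n d M w))"
    by (simp only: hDpow_add_single[OF step(2)] comp_apply step.IH)
  also have "\<dots> = (\<Sum>M\<in>{M. mle M J}. hD d i (of_nat (mbinom n J M) * hscale (dpow n d (J - M) b) (hDpow n d M w)))"
    by (rule additive.sum[OF additive_hD[OF step(2)]])
  also have "\<dots> = (\<Sum>M\<in>{M. mle M J}. of_nat (mbinom n J M) *
      (hscale (dpow n d (J + ?e - M) b) (hDpow n d M w) + hscale (dpow n d (J - M) b) (hDpow n d (M + ?e) w)))"
    by (intro sum.cong refl)
       (simp add: hD_of_nat_mult hD_hscale diff_add_single_mindex dpow_add_single[OF cd] hDpow_add_single step(2))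
  also have "\<dots> = (\<Sum>M\<in>{M. mle M (J + ?e)}. of_nat (mbinom n (J + ?e) M) * hscale (dpow n d (J + ?e - M) b) (hDpow n d M w))"
    by (rule sum_mbinom_add_single[symmetric]) (fact step)+
  finally show ?case .
qed

lemma op_action_dcomp:
  assumes P: "in_KD n P"
  shows "op_action n d (dcomp n d P Q) v = op_action n d P (op_action n d Q v)"
proof -
  have hscale_of_nat_mult: "hscale a (of_nat c * u) = hscale (a * of_nat c) u" for a c u
    by (simp add: hscale_def fun_eq_iff of_nat_fun mult.assoc)
  have "(\<Sum>I\<in>keys Q. \<Sum>M\<in>{M. mle M J}. op_action n d
          (single (M + I) (lookup P J * of_nat (mbinom n J M) * dpow n d (J - M) (lookup Q I))) v)
      = hscale (lookup P J) (hDpow n d J (op_action n d Q v))"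
    if J: "J \<in> keys P" for J
  proof -
    have "in_vars n J" using J P by (simp add: in_KD_def)
    have "hDpow n d J (op_action n d Q v) = (\<Sum>I\<in>keys Q. hDpow n d J (hscale (lookup Q I) (hDpow n d I v)))"
      unfolding op_action_def by (rule additive.sum[OF additive_hDpow])
    also have "\<dots> = (\<Sum>I\<in>keys Q. \<Sum>M\<in>{M. mle M J}.
        of_nat (mbinom n J M) * hscale (dpow n d (J - M) (lookup Q I)) (hDpow n d (M + I) v))"
      by (simp only: hDpow_hscale[OF \<open>in_vars n J\<close>] hDpow_add comp_apply)
    finally show ?thesis
      by (simp add: op_action_single additive.sum[OF additive_hscale] hscale_of_nat_mult hscale_hscale mult.assoc)
  qed
  then have "op_action n d (dcomp n d P Q) v = (\<Sum>J\<in>keys P. hscale (lookup P J) (hDpow n d J (op_action n d Q v)))"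
    by (simp only: dcomp_def op_action_sum cong: sum.cong)
  then show ?thesis
    by (simp only: op_action_def[of n d P])
qed

lemma op_action_hmonomial:
  assumes P: "in_KD n P"
  shows "op_action n d P (hmonomial 0 I) 0 = lookup P I"
proof -
  have "op_action n d P (hmonomial 0 I) 0 = (\<Sum>J\<in>keys P. if J = I then lookup P I else 0)"
    unfolding op_action_def sum_fun_apply
  proof (rule sum.cong[OF refl])
    fix J assume "J \<in> keys P"
    then have "in_vars n J" using P by (simp add: in_KD_def)
    then show "hscale (lookup P J) (hDpow n d J (hmonomial 0 I)) 0 = (if J = I then lookup P I else 0)"
      by (simp add: hDpow_hmonomial hscale_def) (simp add: hmonomial_def)
  qed
  also have "\<dots> = lookup P I"
    by (simp add: in_keys_iff)
  finally show ?thesis .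
qed

lemma op_action_inject:
  assumes "in_KD n P" "in_KD n Q" "\<And>v. op_action n d P v = op_action n d Q v"
  shows "P = Q"
  by (rule poly_mapping_eqI) (metis assms op_action_hmonomial)

end

lemma in_KD_sum: "(\<And>x. x \<in> A \<Longrightarrow> in_KD n (f x)) \<Longrightarrow> in_KD n (sum f A)"
  unfolding in_KD_def using keys_sum[of f A] by blast

lemma in_KD_single: "in_vars n K \<Longrightarrow> in_KD n (single K c)"
  by (simp add: in_KD_def)

lemma in_KD_diff: "in_KD n P \<Longrightarrow> in_KD n Q \<Longrightarrow> in_KD n (P - Q)"
  unfolding in_KD_def using keys_diff[of P Q] by auto

lemma in_KD_scal_op: "in_KD n (scal_op c)"
  by (simp add: scal_op_def in_KD_single in_vars_def)

lemma in_KD_dcomp: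
  assumes "in_KD n P" "in_KD n Q"
  shows "in_KD n (dcomp n d P Q)"
  unfolding dcomp_def
proof (intro in_KD_sum in_KD_single)
  fix J I M assume "J \<in> keys P" "I \<in> keys Q" "M \<in> {M. mle M J}"
  with assms have "in_vars n M" "in_vars n I"
    by (auto simp: in_KD_def intro: in_vars_mle)
  then show "in_vars n (M + I)" by (rule in_vars_add)
qed

lemma in_KD_gauge: "in_KD n X \<Longrightarrow> in_KD n (gauge n d g X)"
  unfolding gauge_def by (intro in_KD_dcomp in_KD_scal_op)

lemma in_KD_foldr_dcomp:
  "\<forall>F\<in>set Fs. in_KD n F \<Longrightarrow> in_KD n (foldr (dcomp n d) Fs (scal_op 1))"
  by (induction Fs) (simp_all add: in_KD_scal_op in_KD_dcomp)

section \<open>Gauge transformations\<close>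

lemma top_coeffs_determine_Sym_ord:
  fixes X Z :: "'k::comm_monoid_add dop"
  assumes X: "X \<noteq> 0" and m: "m = Max (mdeg ` keys X)"
    and above: "\<And>K. m < mdeg K \<Longrightarrow> lookup Z K = 0"
    and top: "\<And>K. mdeg K = m \<Longrightarrow> lookup Z K = lookup X K"
  shows "Sym Z = Sym X" and "ord Z = ord X"
proof -
  have "m \<in> mdeg ` keys X"
    unfolding m using X by (intro Max_in) auto
  then obtain K0 where K0: "K0 \<in> keys X" "mdeg K0 = m" by auto
  then have "K0 \<in> keys Z"
    using top[of K0] by (simp add: in_keys_iff)
  have "mdeg K \<le> m" if "K \<in> keys Z" for K
    using above that by (meson in_keys_iff not_le)
  with \<open>K0 \<in> keys Z\<close> K0 have mZ: "Max (mdeg ` keys Z) = m"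
    by (intro Max_eqI) auto
  have top_keys: "{J\<in>keys Z. mdeg J = m} = {J\<in>keys X. mdeg J = m}"
    using top by (auto simp: in_keys_iff)
  show "Sym Z = Sym X"
    unfolding Sym_def mZ m[symmetric] top_keys by (intro sum.cong refl) (simp add: top)
  show "ord Z = ord X"
    using X \<open>K0 \<in> keys Z\<close> mZ m by (auto simp: ord_def)
qed

context
  fixes n :: nat and d :: "nat \<Rightarrow> 'k::field \<Rightarrow> 'k"
  assumes cd: "commuting_derivations n d"
begin

lemma op_action_scal_op: "op_action n d (scal_op c) v = hscale c v"
  by (simp add: scal_op_def op_action_single hDpow_zero[OF cd])

lemma op_action_gauge:
  "in_KD n X \<Longrightarrow> op_action n d (gauge n d g X) v = hscale (inverse g) (op_action n d X (hscale g v))"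
  by (simp add: gauge_def op_action_dcomp[OF cd] in_KD_scal_op in_KD_dcomp op_action_scal_op)

lemma gauge_diff:
  "in_KD n X \<Longrightarrow> in_KD n Y \<Longrightarrow> gauge n d g (X - Y) = gauge n d g X - gauge n d g Y"
  by (rule op_action_inject[OF cd])
     (simp_all add: in_KD_gauge in_KD_diff op_action_gauge additive.diff[OF additive_op_action] additive.diff[OF additive_hscale])

lemma gauge_dcomp:
  "g \<noteq> 0 \<Longrightarrow> in_KD n A \<Longrightarrow> in_KD n B \<Longrightarrow>
    gauge n d g (dcomp n d A B) = dcomp n d (gauge n d g A) (gauge n d g B)"
  by (rule op_action_inject[OF cd]) (simp_all add: in_KD_gauge in_KD_dcomp op_action_gauge op_action_dcomp[OF cd])

lemma gauge_one: "g \<noteq> 0 \<Longrightarrow> gauge n d g (scal_op 1) = scal_op 1"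
  by (rule op_action_inject[OF cd]) (simp_all add: in_KD_gauge in_KD_scal_op op_action_gauge op_action_scal_op)

lemma gauge_inverse_gauge: "g \<noteq> 0 \<Longrightarrow> in_KD n X \<Longrightarrow> gauge n d (inverse g) (gauge n d g X) = X"
  by (rule op_action_inject[OF cd]) (simp_all add: in_KD_gauge op_action_gauge)

lemma gauge_foldr_dcomp:
  "g \<noteq> 0 \<Longrightarrow> \<forall>F\<in>set Fs. in_KD n F \<Longrightarrow>
    gauge n d g (foldr (dcomp n d) Fs (scal_op 1)) = foldr (dcomp n d) (map (gauge n d g) Fs) (scal_op 1)"
  by (induction Fs) (simp_all add: gauge_one gauge_dcomp in_KD_foldr_dcomp)

lemma lookup_gauge:
  assumes "g \<noteq> 0"
  shows "lookup (gauge n d g X) K = inverse g *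
    (\<Sum>J\<in>keys X. if mle K J then lookup X J * of_nat (mbinom n J K) * dpow n d (J - K) g else 0)"
proof -
  have "lookup (dcomp n d X (scal_op g)) K = (\<Sum>J\<in>keys X. \<Sum>M\<in>{M. mle M J}.
      if M = K then lookup X J * of_nat (mbinom n J M) * dpow n d (J - M) g else 0)"
    using assms by (simp add: dcomp_def scal_op_def lookup_sum lookup_single when_def)
  also have "\<dots> = (\<Sum>J\<in>keys X. if mle K J then lookup X J * of_nat (mbinom n J K) * dpow n d (J - K) g else 0)"
    by (intro sum.cong refl) (simp add: sum.delta[OF finite_mle])
  finally have right: "lookup (dcomp n d X (scal_op g)) K = \<dots>" .
  have "lookup (dcomp n d (scal_op c) Y) K = c * lookup Y K" if "c \<noteq> 0" for c Y
  proof -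
    have "dcomp n d (scal_op c) Y = (\<Sum>I\<in>keys Y. single I (c * lookup Y I))"
      using that by (simp add: dcomp_def scal_op_def mle_zero_iff mbinom_refl dpow_zero[OF cd])
    then show ?thesis
      by (simp add: lookup_sum lookup_single when_def in_keys_iff)
  qed
  with right assms show ?thesis
    by (simp add: gauge_def)
qed

lemma lookup_gauge_top_degree:
  assumes g: "g \<noteq> 0" and top: "\<And>J. J \<in> keys X \<Longrightarrow> mdeg J \<le> mdeg K"
  shows "lookup (gauge n d g X) K = lookup X K"
proof -
  have "(if mle K J then lookup X J * of_nat (mbinom n J K) * dpow n d (J - K) g else 0)
      = (if J = K then lookup X K * g else 0)" if J: "J \<in> keys X" for J
  proof (cases "mle K J")
    case True
    then have "K = J"
      using mle_mdeg_eq_imp_eq[OF True] mdeg_mono[OF True] top[OF J] by simp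
    with True show ?thesis by (simp add: mbinom_refl dpow_zero[OF cd])
  qed (auto simp: mle_def)
  then have "(\<Sum>J\<in>keys X. if mle K J then lookup X J * of_nat (mbinom n J K) * dpow n d (J - K) g else 0)
      = (\<Sum>J\<in>keys X. if J = K then lookup X K * g else 0)"
    by (rule sum.cong[OF refl])
  also have "\<dots> = lookup X K * g"
    by (subst sum.delta) (auto simp: in_keys_iff)
  finally show ?thesis
    using g by (simp add: lookup_gauge[OF g])
qed

lemma gauge_Sym_ord:
  assumes g: "g \<noteq> 0" and X: "in_KD n X"
  shows "Sym (gauge n d g X) = Sym X" and "ord (gauge n d g X) = ord X"
proof -
  have "Sym (gauge n d g X) = Sym X \<and> ord (gauge n d g X) = ord X"
  proof (cases "X = 0")
    case True
    then have "gauge n d g X = 0"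
      using gauge_diff[of 0 0 g] by (simp add: in_KD_def)
    with True show ?thesis by simp
  next
    case False
    define m where "m = Max (mdeg ` keys X)"
    have deg_X: "mdeg J \<le> m" if "J \<in> keys X" for J
      unfolding m_def using that by simp
    have "lookup (gauge n d g X) K = 0" if "m < mdeg K" for K
    proof -
      have "mdeg J \<le> mdeg K" if "J \<in> keys X" for J
        using deg_X[OF that] \<open>m < mdeg K\<close> by simp
      then have "lookup (gauge n d g X) K = lookup X K"
        by (rule lookup_gauge_top_degree[OF g])
      moreover have "K \<notin> keys X"
        using deg_X that by fastforce
      ultimately show ?thesis
        by (simp add: in_keys_iff)
    qed
    moreover have "lookup (gauge n d g X) K = lookup X K" if "mdeg K = m" for K
      using lookup_gauge_top_degree[OF g] deg_X that by simp
    ultimately show ?thesis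
      using top_coeffs_determine_Sym_ord[OF False m_def] by blast
  qed
  then show "Sym (gauge n d g X) = Sym X" and "ord (gauge n d g X) = ord X" by simp_all
qed

lemma has_factorization_gauge:
  assumes g: "g \<noteq> 0" and X: "has_factorization n d X Ss"
  shows "has_factorization n d (gauge n d g X) Ss"
proof -
  obtain Fs where Fs: "length Fs = length Ss" "\<forall>F\<in>set Fs. in_KD n F" "map Sym Fs = Ss"
    "X = foldr (dcomp n d) Fs (scal_op 1)"
    using X unfolding has_factorization_def by blast
  have "map Sym (map (gauge n d g) Fs) = Ss"
    unfolding Fs(3)[symmetric] map_map using Fs(2)
    by (intro map_cong) (auto simp: gauge_Sym_ord(1)[OF g])
  moreover have "gauge n d g X = foldr (dcomp n d) (map (gauge n d g) Fs) (scal_op 1)"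
    using gauge_foldr_dcomp[OF g Fs(2)] Fs(4) by simp
  ultimately show ?thesis
    unfolding has_factorization_def using Fs(1,2)
    by (intro exI[of _ "map (gauge n d g) Fs"]) (auto intro: in_KD_gauge)
qed

end

theorem mainTheorem8:
  fixes n :: nat and d :: "nat \<Rightarrow> 'k::field \<Rightarrow> 'k"
    and L R :: "'k dop" and Ss :: "'k mpoly list" and g :: 'k
  assumes "commuting_derivations n d"
    and "in_KD n L"
    and "\<forall>S\<in>set Ss. homogeneous S \<and> in_KD n S"
    and "Sym L = prod_list Ss"
    and "g \<noteq> 0"
    and "common_obstacle n d L Ss R"
  shows "common_obstacle n d (gauge n d g L) Ss (gauge n d g R)"
proof -
  note cd = assms(1) and L = assms(2) and g = assms(5)
  have R: "in_KD n R" and fact_R: "has_factorization n d (L - R) Ss"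
    and min_R: "\<And>R'. in_KD n R' \<Longrightarrow> has_factorization n d (L - R') Ss \<Longrightarrow> ord R \<le> ord R'"
    using assms(6) unfolding common_obstacle_def by auto
  have "has_factorization n d (gauge n d g L - gauge n d g R) Ss"
    using has_factorization_gauge[OF cd g fact_R] gauge_diff[OF cd L R] by simp
  moreover have "ord (gauge n d g R) \<le> ord R'"
    if R': "in_KD n R'" and fact_R': "has_factorization n d (gauge n d g L - R') Ss" for R'
  proof -
    have "L - gauge n d (inverse g) R' = gauge n d (inverse g) (gauge n d g L - R')"
      using gauge_diff[OF cd in_KD_gauge[OF L] R'] gauge_inverse_gauge[OF cd g L] by simp
    then have "has_factorization n d (L - gauge n d (inverse g) R') Ss"
      using has_factorization_gauge[OF cd _ fact_R'] g by simp
    then have "ord R \<le> ord (gauge n d (inverse g) R')"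
      using min_R in_KD_gauge[OF R'] by blast
    then show ?thesis
      using gauge_Sym_ord(2)[OF cd] g R R' by simp
  qed
  ultimately show ?thesis
    unfolding common_obstacle_def using in_KD_gauge[OF R] by blast
qed

end
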